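(* Let $G,H$ be abelian groups. (a) If there exists $n\in\mathbb{Z}\setminus\{0\}$ with $G\xrightarrow{n}H$, then $\mathrm{rank}_0(G)\le\mathrm{rank}_0(H)$. (b) If there exist $m,n\in\mathbb{Z}\setminus\{0\}$ with $\gcd(m,n)=1$, $G\xrightarrow{m}H$ and $G\xrightarrow{n}H$, then $G$ is a direct summand of $H\oplus H$. In particular, if $G\xrightarrow{*}H$ then $G$ is a direct summand of $H\oplus H$. (c) If there exist relatively prime nonzero integers $n,r$ with $G\xrightarrow{n}H$ and $rG=0$, then $G$ is a direct summand of $H$. (d) If one of $G,H$ is finitely generated, $G\xrightarrow{*}H$ and $H\xrightarrow{*}G$, then $G\cong H$.
   Context: For $n\in\mathbb{Z}\setminus\{0\}$, "$G\xrightarrow{n}H$" means: there exist group homomorphisms $\phi:G\to H$ and $\psi:H\to G$ such that $\psi\circ\phi$ is multiplication by $n$ on $G$. "$G\xrightarrow{*}H$" means: for each $r\in\mathbb{Z}\setminus\{0\}$ there exists $n\in\mathbb{Z}\setminus\{0\}$ with $\gcd(n,r)=1$ and $G\xrightarrow{n}H$. $\mathrm{rank}_0(G)=\dim_{\mathbb{Q}}(\mathbb{Q}\otimes_{\mathbb{Z}}G)$. *)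

theory Defs
  imports "HOL-Algebra.Algebra"
begin

(* Abelian groups are HOL-Algebra commutative groups (written multiplicatively);
   "multiplication by n" on G is  x \<mapsto> x [^] n  with n :: int. *)

definition mult_arrow :: "int \<Rightarrow> ('a, 'c) monoid_scheme \<Rightarrow> ('b, 'd) monoid_scheme \<Rightarrow> bool" where
  "mult_arrow n G H \<longleftrightarrow> (\<exists>\<phi> \<psi>. \<phi> \<in> hom G H \<and> \<psi> \<in> hom H G \<and>
      (\<forall>x \<in> carrier G. \<psi> (\<phi> x) = x [^]\<^bsub>G\<^esub> n))"

definition star_arrow :: "('a, 'c) monoid_scheme \<Rightarrow> ('b, 'd) monoid_scheme \<Rightarrow> bool" where
  "star_arrow G H \<longleftrightarrow> (\<forall>r::int. r \<noteq> 0 \<longrightarrow>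
      (\<exists>n::int. n \<noteq> 0 \<and> gcd n r = 1 \<and> mult_arrow n G H))"

definition Z_independent :: "('a, 'c) monoid_scheme \<Rightarrow> 'a set \<Rightarrow> bool" where
  "Z_independent G A \<longleftrightarrow> A \<subseteq> carrier G \<and>
     (\<forall>S c. finite S \<and> S \<subseteq> A \<and> finprod G (\<lambda>x. x [^]\<^bsub>G\<^esub> (c x :: int)) S = \<one>\<^bsub>G\<^esub>
        \<longrightarrow> (\<forall>x \<in> S. c x = 0))"

(* rank_0(G) \<le> rank_0(H), as cardinals: rank_0 is the cardinality of a maximal
   Z-independent subset (= dim_Q (Q \<otimes> G)); the inequality says every independent
   subset of G injects into some independent subset of H. *)
definition rank0_le :: "('a, 'c) monoid_scheme \<Rightarrow> ('b, 'd) monoid_scheme \<Rightarrow> bool" where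
  "rank0_le G H \<longleftrightarrow> (\<forall>A. Z_independent G A \<longrightarrow>
      (\<exists>B f. Z_independent H B \<and> inj_on f A \<and> f ` A \<subseteq> B))"

definition direct_summand :: "('a, 'c) monoid_scheme \<Rightarrow> ('b, 'd) monoid_scheme \<Rightarrow> bool" where
  "direct_summand G K \<longleftrightarrow> (\<exists>A B. subgroup A K \<and> subgroup B K \<and> A \<inter> B = {\<one>\<^bsub>K\<^esub>} \<and>
      A <#>\<^bsub>K\<^esub> B = carrier K \<and> G \<cong> subgroup_generated K A)"

definition fin_gen :: "('a, 'c) monoid_scheme \<Rightarrow> bool" where
  "fin_gen G \<longleftrightarrow> (\<exists>S. finite S \<and> S \<subseteq> carrier G \<and> generate G S = carrier G)"

end

theory Submission
  imports Defs
begin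

text \<open>
  If psi o phi is multiplication by n \<noteq> 0, then phi is injective on every Z-independent set and
  maps it to a Z-independent set; this gives (a). If a m + b n = 1, the map
  x \<mapsto> (phi1(x)^a, phi2(x)^b) into H \<oplus> H has the left inverse (u, v) \<mapsto> psi1(u) psi2(v), and a
  retraction exhibits its source as a direct summand (image plus kernel); this gives (b), and (c)
  is the same argument with a n + b r = 1 and r G = 0.

  For (d), the retraction of (b) makes G a quotient of H \<oplus> H, so both groups are finitely
  generated. A finitely generated abelian group is the direct sum of independent cyclic subgroups,
  hence isomorphic to T \<oplus> Z^k with T its finite torsion subgroup. An arrow whose n is prime to |T(G)|
  is injective on T(G), so arrows in both directions force T(G) \<cong> T(H). The free ranks agree by (a),
  because Z^k contains no k + 1 independent elements.
\<close>

section \<open>Arrows, retracts and independent sets\<close>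

lemma hom_finprod:
  assumes G: "comm_group G" and H: "comm_group H" and h: "h \<in> hom G H"
    and f: "f \<in> A \<rightarrow> carrier G"
  shows "h (finprod G f A) = finprod H (\<lambda>i. h (f i)) A"
proof -
  interpret G: comm_group G by fact
  interpret H: comm_group H by fact
  interpret h: group_hom G H h using h by (simp add: group_hom_def group_hom_axioms_def)
  show ?thesis
  proof (cases "finite A")
    case True
    then show ?thesis using f
      by (induction A rule: finite_induct) (auto simp: G.finprod_insert H.finprod_insert Pi_def)
  qed simp
qed

lemma hom_comp_int_pow:
  assumes "group G" "comm_group H" "f \<in> hom G H"
  shows "(\<lambda>x. f x [^]\<^bsub>H\<^esub> (a::int)) \<in> hom G H"
proof -
  interpret H: comm_group H by fact
  show ?thesis using assms(3) unfolding hom_def by (auto simp: H.int_pow_distrib Pi_def)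
qed

lemma mult_arrowE:
  assumes "mult_arrow n G H"
  obtains \<phi> \<psi> where "\<phi> \<in> hom G H" "\<psi> \<in> hom H G" "\<And>x. x \<in> carrier G \<Longrightarrow> \<psi> (\<phi> x) = x [^]\<^bsub>G\<^esub> n"
  using assms unfolding mult_arrow_def by blast

lemma star_arrowD:
  assumes "star_arrow G H" "r \<noteq> 0"
  obtains n where "n \<noteq> 0" "coprime n r" "mult_arrow n G H"
  using assms unfolding star_arrow_def by (auto simp: coprime_iff_gcd_eq_1)

lemma star_arrow_coprime_pair:
  assumes "star_arrow G H"
  obtains m n where "m \<noteq> 0" "n \<noteq> 0" "coprime m n" "mult_arrow m G H" "mult_arrow n G H"
proof -
  obtain m where m: "m \<noteq> 0" "mult_arrow m G H" using star_arrowD[OF assms, of 1] by auto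
  obtain n where "n \<noteq> 0" "coprime n m" "mult_arrow n G H" using star_arrowD[OF assms m(1)] .
  then show thesis using that m by (simp add: coprime_commute)
qed

lemma retract_direct_summand:
  assumes G: "comm_group G" and K: "comm_group K" and P: "P \<in> hom G K" and Q: "Q \<in> hom K G"
    and QP: "\<And>x. x \<in> carrier G \<Longrightarrow> Q (P x) = x"
  shows "direct_summand G K"
proof -
  interpret G: comm_group G by fact
  interpret K: comm_group K by fact
  interpret P: group_hom G K P using P by (simp add: group_hom_def group_hom_axioms_def)
  interpret Q: group_hom K G Q using Q by (simp add: group_hom_def group_hom_axioms_def)
  define A where "A = P ` carrier G"
  define B where "B = kernel K G Q"
  have A: "subgroup A K" unfolding A_def by (rule P.img_is_subgroup)
  have B: "subgroup B K" unfolding B_def by (rule Q.subgroup_kernel)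
  have "A \<inter> B \<subseteq> {\<one>\<^bsub>K\<^esub>}"
    unfolding A_def B_def kernel_def using QP by auto
  then have AB: "A \<inter> B = {\<one>\<^bsub>K\<^esub>}"
    using subgroup.one_closed[OF A] subgroup.one_closed[OF B] by auto
  have "k \<in> A <#>\<^bsub>K\<^esub> B" if k: "k \<in> carrier K" for k
  proof -
    have "P (Q k) \<in> A" "inv\<^bsub>K\<^esub> P (Q k) \<otimes>\<^bsub>K\<^esub> k \<in> B"
      using k QP unfolding A_def B_def kernel_def by (auto simp: Q.hom_inv)
    moreover have "k = P (Q k) \<otimes>\<^bsub>K\<^esub> (inv\<^bsub>K\<^esub> P (Q k) \<otimes>\<^bsub>K\<^esub> k)"
      using k by (simp add: K.m_assoc[symmetric])
    ultimately show ?thesis unfolding set_mult_def by blast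
  qed
  moreover have "A <#>\<^bsub>K\<^esub> B \<subseteq> carrier K"
    using A B by (intro K.set_mult_closed subgroup.subset)
  ultimately have sum: "A <#>\<^bsub>K\<^esub> B = carrier K" by blast
  have "P \<in> iso G (subgroup_generated K A)"
  proof -
    have "carrier (subgroup_generated K A) = A"
      using A by (simp add: subgroup.carrier_subgroup_generated_subgroup)
    moreover have "bij_betw P (carrier G) A"
      unfolding bij_betw_def A_def by (metis QP inj_on_inverseI)
    ultimately show ?thesis using P unfolding iso_def hom_def bij_betw_def by auto
  qed
  then show ?thesis unfolding direct_summand_def using A B AB sum is_isoI by blast
qed

lemma Z_independentD:
  assumes "Z_independent G A" "finite S" "S \<subseteq> A"
    "finprod G (\<lambda>x. x [^]\<^bsub>G\<^esub> (c x :: int)) S = \<one>\<^bsub>G\<^esub>" "x \<in> S"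
  shows "c x = 0"
  using assms unfolding Z_independent_def by blast

lemma mult_arrow_inj_on_Z_independent:
  assumes G: "comm_group G" and H: "comm_group H" and \<phi>: "\<phi> \<in> hom G H" and \<psi>: "\<psi> \<in> hom H G"
    and \<psi>\<phi>: "\<And>x. x \<in> carrier G \<Longrightarrow> \<psi> (\<phi> x) = x [^]\<^bsub>G\<^esub> (n::int)"
    and n: "n \<noteq> 0" and A: "Z_independent G A"
  shows "inj_on \<phi> A"
proof (rule inj_onI, rule ccontr)
  interpret G: comm_group G by fact
  fix a b assume ab: "a \<in> A" "b \<in> A" "\<phi> a = \<phi> b" "a \<noteq> b"
  have abG: "a \<in> carrier G" "b \<in> carrier G" using ab A unfolding Z_independent_def by auto
  define c where "c x = (if x = a then n else - n)" for x
  have "a [^]\<^bsub>G\<^esub> n = b [^]\<^bsub>G\<^esub> n" using \<psi>\<phi> abG ab(3) by metis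
  then have rel: "finprod G (\<lambda>x. x [^]\<^bsub>G\<^esub> c x) {a, b} = \<one>\<^bsub>G\<^esub>"
    using ab abG by (simp add: G.finprod_insert c_def G.int_pow_neg)
  have "c a = 0" by (rule Z_independentD[OF A _ _ rel]) (use ab in auto)
  then show False using n by (simp add: c_def)
qed

lemma mult_arrow_Z_independent_image:
  assumes G: "comm_group G" and H: "comm_group H" and \<phi>: "\<phi> \<in> hom G H" and \<psi>: "\<psi> \<in> hom H G"
    and \<psi>\<phi>: "\<And>x. x \<in> carrier G \<Longrightarrow> \<psi> (\<phi> x) = x [^]\<^bsub>G\<^esub> (n::int)"
    and n: "n \<noteq> 0" and A: "Z_independent G A"
  shows "Z_independent H (\<phi> ` A)"
  unfolding Z_independent_def
proof (intro conjI allI impI)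
  interpret G: comm_group G by fact
  interpret H: comm_group H by fact
  interpret \<psi>: group_hom H G \<psi> using \<psi> by (simp add: group_hom_def group_hom_axioms_def)
  have AG: "A \<subseteq> carrier G" using A unfolding Z_independent_def by simp
  then show "\<phi> ` A \<subseteq> carrier H" using \<phi> by (auto simp: hom_in_carrier)
  fix S c assume "finite S \<and> S \<subseteq> \<phi> ` A \<and> finprod H (\<lambda>y. y [^]\<^bsub>H\<^esub> (c y :: int)) S = \<one>\<^bsub>H\<^esub>"
  then have S: "finite S" "S \<subseteq> \<phi> ` A" and rel: "finprod H (\<lambda>y. y [^]\<^bsub>H\<^esub> c y) S = \<one>\<^bsub>H\<^esub>"
    by auto
  obtain C where C: "C \<subseteq> A" "finite C" "S = \<phi> ` C"
    using S by (meson finite_subset_image)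
  have inj: "inj_on \<phi> C"
    using mult_arrow_inj_on_Z_independent[OF assms] C(1) inj_on_subset by blast
  have CG: "C \<subseteq> carrier G" using C(1) AG by blast
  have "finprod G (\<lambda>x. x [^]\<^bsub>G\<^esub> (n * c (\<phi> x))) C
      = \<psi> (finprod H (\<lambda>x. \<phi> x [^]\<^bsub>H\<^esub> c (\<phi> x)) C)"
    using CG \<phi> \<psi>\<phi> by (subst hom_finprod[OF H G \<psi>])
      (auto simp: hom_in_carrier \<psi>.hom_int_pow G.int_pow_pow intro!: G.finprod_cong')
  also have "finprod H (\<lambda>x. \<phi> x [^]\<^bsub>H\<^esub> c (\<phi> x)) C = \<one>\<^bsub>H\<^esub>"
    using rel inj CG \<phi> unfolding C(3) by (subst (asm) H.finprod_reindex) (auto simp: hom_in_carrier)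
  finally have "\<forall>x\<in>C. n * c (\<phi> x) = 0"
    using Z_independentD[OF A C(2) C(1), of "\<lambda>x. n * c (\<phi> x)"] by simp
  then show "\<forall>y\<in>S. c y = 0" using C(3) n by auto
qed

lemma rank0_le_if_mult_arrow:
  assumes "comm_group G" "comm_group H" "n \<noteq> 0" "mult_arrow n G H"
  shows "rank0_le G H"
  using assms(4) unfolding rank0_le_def
  by (elim mult_arrowE) (use mult_arrow_inj_on_Z_independent[OF assms(1,2) _ _ _ assms(3)]
        mult_arrow_Z_independent_image[OF assms(1,2) _ _ _ assms(3)] in blast)

lemma rank0_le_if_star_arrow:
  assumes "comm_group G" "comm_group H" "star_arrow G H"
  shows "rank0_le G H"
proof -
  obtain n where "n \<noteq> 0" "mult_arrow n G H"
    using star_arrowD[OF assms(3), of 1] by (metis one_neq_zero)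
  then show ?thesis by (rule rank0_le_if_mult_arrow[OF assms(1,2)])
qed

lemma coprime_mult_arrows_retract:
  assumes G: "comm_group G" and H: "comm_group H" and "coprime m n"
    and "mult_arrow m G H" "mult_arrow n G H"
  obtains P Q where "P \<in> hom G (H \<times>\<times> H)" "Q \<in> hom (H \<times>\<times> H) G"
    "\<And>x. x \<in> carrier G \<Longrightarrow> Q (P x) = x"
proof -
  interpret G: comm_group G by fact
  interpret H: comm_group H by fact
  obtain \<phi>1 \<psi>1 where \<phi>1: "\<phi>1 \<in> hom G H" and \<psi>1: "\<psi>1 \<in> hom H G"
    and \<psi>\<phi>1: "\<And>x. x \<in> carrier G \<Longrightarrow> \<psi>1 (\<phi>1 x) = x [^]\<^bsub>G\<^esub> m"
    using \<open>mult_arrow m G H\<close> by (elim mult_arrowE) blast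
  obtain \<phi>2 \<psi>2 where \<phi>2: "\<phi>2 \<in> hom G H" and \<psi>2: "\<psi>2 \<in> hom H G"
    and \<psi>\<phi>2: "\<And>x. x \<in> carrier G \<Longrightarrow> \<psi>2 (\<phi>2 x) = x [^]\<^bsub>G\<^esub> n"
    using \<open>mult_arrow n G H\<close> by (elim mult_arrowE) blast
  interpret \<psi>1: group_hom H G \<psi>1 using \<psi>1 by (simp add: group_hom_def group_hom_axioms_def)
  interpret \<psi>2: group_hom H G \<psi>2 using \<psi>2 by (simp add: group_hom_def group_hom_axioms_def)
  obtain a b where ab: "a * m + b * n = 1"
    using bezout_int[of m n] \<open>coprime m n\<close> by (auto simp: coprime_iff_gcd_eq_1)
  define P where "P x = (\<phi>1 x [^]\<^bsub>H\<^esub> a, \<phi>2 x [^]\<^bsub>H\<^esub> b)" for x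
  define Q where "Q = (\<lambda>(u, v). \<psi>1 u \<otimes>\<^bsub>G\<^esub> \<psi>2 v)"
  show thesis
  proof
    show "P \<in> hom G (H \<times>\<times> H)"
      unfolding hom_pairwise P_def o_def
      using hom_comp_int_pow[OF G.is_group H \<phi>1] hom_comp_int_pow[OF G.is_group H \<phi>2] by simp
    show "Q \<in> hom (H \<times>\<times> H) G"
      using \<psi>1 \<psi>2 unfolding Q_def hom_def by (auto simp: Pi_def G.m_ac)
    fix x assume x: "x \<in> carrier G"
    have "Q (P x) = (x [^]\<^bsub>G\<^esub> m) [^]\<^bsub>G\<^esub> a \<otimes>\<^bsub>G\<^esub> (x [^]\<^bsub>G\<^esub> n) [^]\<^bsub>G\<^esub> b"
      using x \<phi>1 \<phi>2 by (simp add: Q_def P_def \<psi>1.hom_int_pow \<psi>2.hom_int_pow hom_in_carrier \<psi>\<phi>1 \<psi>\<phi>2)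
    also have "\<dots> = x [^]\<^bsub>G\<^esub> (a * m + b * n)"
      using x by (simp add: G.int_pow_pow G.int_pow_mult mult.commute)
    finally show "Q (P x) = x" using x ab by simp
  qed
qed

lemma direct_summand_DirProd_if_coprime_arrows:
  assumes G: "comm_group G" and H: "comm_group H" and "coprime m n"
    and "mult_arrow m G H" "mult_arrow n G H"
  shows "direct_summand G (H \<times>\<times> H)"
proof -
  interpret H: comm_group H by fact
  have "comm_group (H \<times>\<times> H)"
    by (rule group.group_comm_groupI[OF DirProd_group[OF H.is_group H.is_group]]) (auto simp: H.m_comm)
  then show ?thesis
    using coprime_mult_arrows_retract[OF assms] retract_direct_summand[OF G] by metis
qed

lemma direct_summand_if_coprime_exponent:
  assumes G: "comm_group G" and H: "comm_group H" and "coprime n r"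
    and "mult_arrow n G H" and exp: "\<And>x. x \<in> carrier G \<Longrightarrow> x [^]\<^bsub>G\<^esub> r = \<one>\<^bsub>G\<^esub>"
  shows "direct_summand G H"
proof -
  interpret G: comm_group G by fact
  interpret H: comm_group H by fact
  obtain \<phi> \<psi> where \<phi>: "\<phi> \<in> hom G H" and \<psi>: "\<psi> \<in> hom H G"
    and \<psi>\<phi>: "\<And>x. x \<in> carrier G \<Longrightarrow> \<psi> (\<phi> x) = x [^]\<^bsub>G\<^esub> (n::int)"
    using \<open>mult_arrow n G H\<close> by (elim mult_arrowE) blast
  interpret \<psi>: group_hom H G \<psi> using \<psi> by (simp add: group_hom_def group_hom_axioms_def)
  obtain a b where ab: "a * n + b * r = 1"
    using bezout_int[of n r] \<open>coprime n r\<close> by (auto simp: coprime_iff_gcd_eq_1)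
  have "\<psi> (\<phi> x [^]\<^bsub>H\<^esub> a) = x" if x: "x \<in> carrier G" for x
  proof -
    have "\<psi> (\<phi> x [^]\<^bsub>H\<^esub> a) = (x [^]\<^bsub>G\<^esub> n) [^]\<^bsub>G\<^esub> a \<otimes>\<^bsub>G\<^esub> (x [^]\<^bsub>G\<^esub> r) [^]\<^bsub>G\<^esub> b"
      using x \<phi> by (simp add: \<psi>.hom_int_pow hom_in_carrier \<psi>\<phi> exp)
    also have "\<dots> = x [^]\<^bsub>G\<^esub> (a * n + b * r)"
      using x by (simp add: G.int_pow_pow G.int_pow_mult mult.commute)
    finally show ?thesis using x ab by simp
  qed
  then show ?thesis
    using retract_direct_summand[OF G H hom_comp_int_pow[OF G.is_group H \<phi>] \<psi>] by blast
qed

section \<open>Integer linear combinations\<close>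

definition lincomb :: "('a, 'c) monoid_scheme \<Rightarrow> 'i set \<Rightarrow> ('i \<Rightarrow> 'a) \<Rightarrow> ('i \<Rightarrow> int) \<Rightarrow> 'a" where
  "lincomb G I z c = finprod G (\<lambda>i. z i [^]\<^bsub>G\<^esub> c i) I"

context comm_group
begin

lemma lincomb_closed [simp]: "z \<in> I \<rightarrow> carrier G \<Longrightarrow> lincomb G I z c \<in> carrier G"
  unfolding lincomb_def by (auto intro: finprod_closed)

lemma lincomb_zero_coeffs: "(\<And>i. i \<in> I \<Longrightarrow> c i = 0) \<Longrightarrow> lincomb G I z c = \<one>"
  unfolding lincomb_def by (rule finprod_one_eqI) simp

lemma lincomb_cong:
  assumes "\<And>i. i \<in> I \<Longrightarrow> z i [^] c i = z' i [^] c' i" "z \<in> I \<rightarrow> carrier G"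
  shows "lincomb G I z c = lincomb G I z' c'"
  unfolding lincomb_def using assms by (intro finprod_cong') (auto simp: Pi_def simp flip: assms(1))

lemma lincomb_insert:
  "finite I \<Longrightarrow> i \<notin> I \<Longrightarrow> z \<in> insert i I \<rightarrow> carrier G \<Longrightarrow>
    lincomb G (insert i I) z c = z i [^] c i \<otimes> lincomb G I z c"
  unfolding lincomb_def by (auto intro: finprod_insert)

lemma lincomb_Un_disjoint:
  "finite I \<Longrightarrow> finite J \<Longrightarrow> I \<inter> J = {} \<Longrightarrow> z \<in> I \<union> J \<rightarrow> carrier G \<Longrightarrow>
    lincomb G (I \<union> J) z c = lincomb G I z c \<otimes> lincomb G J z c"
  unfolding lincomb_def by (rule finprod_Un_disjoint) auto

lemma lincomb_mult:
  assumes "z \<in> I \<rightarrow> carrier G"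
  shows "lincomb G I z a \<otimes> lincomb G I z b = lincomb G I z (\<lambda>i. a i + b i)"
proof -
  have "lincomb G I z (\<lambda>i. a i + b i) = finprod G (\<lambda>i. z i [^] a i \<otimes> z i [^] b i) I"
    unfolding lincomb_def using assms by (intro finprod_cong') (auto simp: int_pow_mult Pi_def)
  then show ?thesis using assms by (simp add: lincomb_def Pi_def)
qed

lemma lincomb_pow:
  assumes "finite I" "z \<in> I \<rightarrow> carrier G"
  shows "lincomb G I z c [^] (m::int) = lincomb G I z (\<lambda>i. m * c i)"
  using assms
proof (induction I rule: finite_induct)
  case (insert i I)
  then show ?case by (simp add: lincomb_insert int_pow_distrib int_pow_pow mult.commute)
qed (simp add: lincomb_def)

lemma lincomb_inv:
  "finite I \<Longrightarrow> z \<in> I \<rightarrow> carrier G \<Longrightarrow> inv (lincomb G I z c) = lincomb G I z (\<lambda>i. - c i)"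
  using lincomb_pow[of I z c "-1"] by (simp add: int_pow_neg)

lemma lincomb_in_subgroup:
  assumes "subgroup K G" "z ` I \<subseteq> K"
  shows "lincomb G I z c \<in> K"
proof (cases "finite I")
  case True
  have "z \<in> I \<rightarrow> carrier G" using assms subgroup.subset by blast
  with True assms(2) show ?thesis
  proof (induction I rule: finite_induct)
    case (insert i I)
    then show ?case
      using assms(1) by (simp add: lincomb_insert subgroup.m_closed subgroup_int_pow_closed)
  qed (simp add: lincomb_def subgroup.one_closed assms(1))
qed (simp add: lincomb_def subgroup.one_closed assms(1))

lemma finprod_lincomb_pow:
  assumes "finite B" "finite I" "z \<in> I \<rightarrow> carrier G"
  shows "finprod G (\<lambda>b. lincomb G I z (cb b) [^] (m b :: int)) B
    = lincomb G I z (\<lambda>i. \<Sum>b\<in>B. m b * cb b i)"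
  using assms(1)
proof (induction B rule: finite_induct)
  case empty
  then show ?case by (simp add: lincomb_zero_coeffs)
next
  case (insert x F)
  then show ?case
    using assms(2,3) by (simp add: lincomb_pow lincomb_mult finprod_insert Pi_def)
qed

lemma generate_eq_range_lincomb:
  assumes I: "finite I" and z: "z \<in> I \<rightarrow> carrier G"
  shows "generate G (z ` I) = range (lincomb G I z)"
proof
  show "range (lincomb G I z) \<subseteq> generate G (z ` I)"
    using z generate.incl[of _ "z ` I" G]
    by (auto intro!: lincomb_in_subgroup generate_is_subgroup)
  have "subgroup (range (lincomb G I z)) G"
  proof (rule subgroupI)
    fix a b assume "a \<in> range (lincomb G I z)" "b \<in> range (lincomb G I z)"
    then show "inv a \<in> range (lincomb G I z)" "a \<otimes> b \<in> range (lincomb G I z)"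
      using I z by (auto simp: lincomb_inv lincomb_mult)
  qed (use z in auto)
  moreover have "z j \<in> range (lincomb G I z)" if j: "j \<in> I" for j
  proof -
    have "lincomb G I z (\<lambda>i. if i = j then 1 else 0) = finprod G (\<lambda>i. if j = i then z i else \<one>) I"
      unfolding lincomb_def using z by (intro finprod_cong') (auto simp: Pi_def)
    then show ?thesis using finprod_singleton[OF j I z] by (metis rangeI)
  qed
  ultimately show "generate G (z ` I) \<subseteq> range (lincomb G I z)"
    by (intro generate_subgroup_incl) auto
qed

end

section \<open>Decomposition into independent cyclic subgroups\<close>

definition cyclic_independent :: "('a, 'c) monoid_scheme \<Rightarrow> 'i set \<Rightarrow> ('i \<Rightarrow> 'a) \<Rightarrow> bool" where
  "cyclic_independent G I z \<longleftrightarrow>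
     (\<forall>c. lincomb G I z c = \<one>\<^bsub>G\<^esub> \<longrightarrow> (\<forall>i \<in> I. z i [^]\<^bsub>G\<^esub> c i = \<one>\<^bsub>G\<^esub>))"

lemma (in comm_group) cyclic_independent_subset:
  assumes "finite I" "z \<in> I \<rightarrow> carrier G" "cyclic_independent G I z" "J \<subseteq> I"
  shows "cyclic_independent G J z"
  unfolding cyclic_independent_def
proof (intro allI impI ballI)
  fix c j assume c: "lincomb G J z c = \<one>" and j: "j \<in> J"
  define c' where "c' i = (if i \<in> J then c i else 0)" for i
  have "I = (I - J) \<union> J" using assms(4) by blast
  then have "lincomb G I z c' = lincomb G (I - J) z c' \<otimes> lincomb G J z c'"
    using assms(1,2) lincomb_Un_disjoint[of "I - J" J z c'] finite_subset[OF assms(4,1)] by auto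
  also have "lincomb G (I - J) z c' = \<one>" by (rule lincomb_zero_coeffs) (simp add: c'_def)
  also have "lincomb G J z c' = lincomb G J z c"
    using assms(2,4) by (intro lincomb_cong) (auto simp: c'_def)
  finally have "lincomb G I z c' = \<one>" using c by simp
  then have "z j [^] c' j = \<one>"
    using assms(3) j \<open>J \<subseteq> I\<close> unfolding cyclic_independent_def by blast
  then show "z j [^] c j = \<one>" using j by (simp add: c'_def)
qed

lemma (in group) int_pow_mod_eq:
  assumes "x \<in> carrier G" "x [^] (a::int) = \<one>"
  shows "x [^] (m mod a) = x [^] m"
proof -
  have "int (ord x) dvd a" using assms by (simp add: int_pow_eq_id)
  then have "int (ord x) dvd m - m mod a" using dvd_minus_mod dvd_trans by blast
  then show ?thesis using assms(1) by (simp add: int_pow_eq)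
qed

context comm_group
begin

lemma generate_insert_mult:
  assumes S: "S \<subseteq> carrier G" and x: "x \<in> carrier G" and y: "y \<in> generate G S"
  shows "generate G (insert (x \<otimes> y) S) = generate G (insert x S)"
proof -
  have yG: "y \<in> carrier G" using generate_in_carrier[OF S y] .
  have sub: "subgroup (generate G (insert u S)) G" if "u \<in> carrier G" for u
    using that S by (intro generate_is_subgroup) auto
  have S_in: "S \<subseteq> generate G (insert u S)" for u
    using generate.incl[of _ "insert u S" G] by blast
  have y_in: "y \<in> generate G (insert u S)" for u
    using y mono_generate[of S "insert u S"] by auto
  have u_in: "u \<in> generate G (insert u S)" for u
    by (simp add: generate.incl)
  have "x \<otimes> y \<in> generate G (insert x S)"
    using subgroup.m_closed[OF sub[OF x] u_in y_in] .
  then have "generate G (insert (x \<otimes> y) S) \<subseteq> generate G (insert x S)"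
    using S_in by (intro generate_subgroup_incl[OF _ sub[OF x]]) auto
  moreover have "x = (x \<otimes> y) \<otimes> inv y" using x yG by (simp add: m_assoc)
  then have "x \<in> generate G (insert (x \<otimes> y) S)"
    using subgroup.m_closed[OF sub u_in subgroup.m_inv_closed[OF sub y_in]] x yG by (metis m_closed)
  then have "generate G (insert x S) \<subseteq> generate G (insert (x \<otimes> y) S)"
    using S_in x yG by (intro generate_subgroup_incl[OF _ sub]) auto
  ultimately show ?thesis by blast
qed

lemma generate_insert_cong:
  assumes "S \<subseteq> carrier G" "S' \<subseteq> carrier G" "x \<in> carrier G" "generate G S = generate G S'"
  shows "generate G (insert x S) = generate G (insert x S')"
proof -
  have "generate G (insert x T) \<subseteq> generate G (insert x T')"
    if "T' \<subseteq> carrier G" "generate G T = generate G T'" for T T'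
  proof (rule generate_subgroup_incl)
    show "subgroup (generate G (insert x T')) G" using that assms(3) by (intro generate_is_subgroup) auto
    have "T \<subseteq> generate G T'" using that(2) generate.incl[of _ T G] by blast
    also have "\<dots> \<subseteq> generate G (insert x T')" by (rule mono_generate) auto
    finally show "insert x T \<subseteq> generate G (insert x T')" by (auto intro: generate.incl)
  qed
  then show ?thesis using assms by (metis equalityI)
qed

definition leading_coeff :: "'a set \<Rightarrow> 'i set \<Rightarrow> int \<Rightarrow> bool" where
  "leading_coeff A I a \<longleftrightarrow> (\<exists>x w d. x \<in> carrier G \<and> w \<in> I \<rightarrow> carrier G \<and>
     generate G (insert x (w ` I)) = A \<and> x [^] a \<otimes> lincomb G I w d = \<one>)"

lemma leading_coeff_uminus:
  assumes "finite I" "leading_coeff A I a"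
  shows "leading_coeff A I (- a)"
proof -
  obtain x w d where x: "x \<in> carrier G" and w: "w \<in> I \<rightarrow> carrier G"
    and gen: "generate G (insert x (w ` I)) = A" and rel: "x [^] a \<otimes> lincomb G I w d = \<one>"
    using assms(2) unfolding leading_coeff_def by blast
  have "x [^] (- a) \<otimes> lincomb G I w (\<lambda>i. - d i) = inv (x [^] a \<otimes> lincomb G I w d)"
    using assms(1) x w by (simp add: int_pow_neg lincomb_inv inv_mult m_comm)
  then show ?thesis using x w gen rel unfolding leading_coeff_def by auto
qed

lemma leading_coeff_swap:
  assumes I: "finite I" "i \<in> I" and x: "x \<in> carrier G" and w: "w \<in> I \<rightarrow> carrier G"
    and gen: "generate G (insert x (w ` I)) = A" and rel: "x [^] (m::int) \<otimes> lincomb G I w d = \<one>"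
  shows "leading_coeff A I (d i)"
proof -
  have w': "w(i := x) \<in> I \<rightarrow> carrier G" using w x by auto
  have rest: "lincomb G (I - {i}) (w(i := x)) (d(i := m)) = lincomb G (I - {i}) w d"
    using w by (intro lincomb_cong) auto
  have "lincomb G I w d = w i [^] d i \<otimes> lincomb G (I - {i}) w d"
    using lincomb_insert[of "I - {i}" i w d] I w by (simp add: insert_absorb)
  moreover have "lincomb G I (w(i := x)) (d(i := m)) = x [^] m \<otimes> lincomb G (I - {i}) w d"
    using lincomb_insert[of "I - {i}" i "w(i := x)" "d(i := m)"] I w' rest by (simp add: insert_absorb)
  ultimately have "w i [^] d i \<otimes> lincomb G I (w(i := x)) (d(i := m)) = x [^] m \<otimes> lincomb G I w d"
    using I x w by (simp add: m_lcomm Pi_def)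
  moreover have "insert (w i) ((w(i := x)) ` I) = insert x (w ` I)"
    using I by (auto simp: fun_upd_image)
  ultimately show ?thesis
    unfolding leading_coeff_def using I w w' gen rel
    by (intro exI[of _ "w i"] exI[of _ "w(i := x)"] exI[of _ "d(i := m)"]) auto
qed

lemma relation_reduce:
  assumes "finite I" "x \<in> carrier G" "w \<in> I \<rightarrow> carrier G" "x [^] (a::int) \<otimes> lincomb G I w d = \<one>"
  shows "(x \<otimes> lincomb G I w (\<lambda>i. d i div a)) [^] a \<otimes> lincomb G I w (\<lambda>i. d i mod a) = \<one>"
proof -
  have "lincomb G I w (\<lambda>i. a * (d i div a)) \<otimes> lincomb G I w (\<lambda>i. d i mod a) = lincomb G I w d"
    using assms(3) by (simp add: lincomb_mult)
  then show ?thesis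
    using assms by (simp add: int_pow_distrib lincomb_pow m_assoc)
qed

text \<open>The classical minimality argument: take a relation among generators of A whose leading
  exponent a > 0 is least possible. Reducing the other exponents modulo a and swapping them into
  the leading position shows, by minimality, that they are divisible by a; the adjusted leading
  generator then has order dividing a and meets the subgroup generated by the others trivially.\<close>

lemma minimal_leading_coeff_splits:
  assumes I: "finite I" and a: "a > 0" "leading_coeff A I a"
    and minimal: "\<And>b. leading_coeff A I b \<Longrightarrow> 0 \<le> b \<Longrightarrow> b < a \<Longrightarrow> b = 0"
  obtains x w where "x \<in> carrier G" "w \<in> I \<rightarrow> carrier G" "generate G (insert x (w ` I)) = A"
    "\<And>m e. x [^] m \<otimes> lincomb G I w e = \<one> \<Longrightarrow> x [^] (m::int) = \<one>"
proof -
  obtain x w d where x: "x \<in> carrier G" and w: "w \<in> I \<rightarrow> carrier G"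
    and gen: "generate G (insert x (w ` I)) = A" and rel: "x [^] a \<otimes> lincomb G I w d = \<one>"
    using a(2) unfolding leading_coeff_def by blast
  define x' where "x' = x \<otimes> lincomb G I w (\<lambda>i. d i div a)"
  have x': "x' \<in> carrier G" unfolding x'_def using x w by simp
  have gen': "generate G (insert x' (w ` I)) = A"
    unfolding x'_def gen[symmetric] using x w I
    by (intro generate_insert_mult) (auto simp: generate_eq_range_lincomb)
  have rel': "x' [^] a \<otimes> lincomb G I w (\<lambda>i. d i mod a) = \<one>"
    unfolding x'_def by (rule relation_reduce[OF I x w rel])
  have "d i mod a = 0" if "i \<in> I" for i
    using minimal[OF leading_coeff_swap[OF I that x' w gen' rel']] a(1) by simp
  then have x'_a: "x' [^] a = \<one>"
    using rel' x' by (simp add: lincomb_zero_coeffs)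
  show thesis
  proof (rule that[OF x' w gen'])
    fix m e assume "x' [^] (m::int) \<otimes> lincomb G I w e = \<one>"
    then have "x' [^] (m mod a) \<otimes> lincomb G I w e = \<one>"
      using int_pow_mod_eq[OF x' x'_a] by simp
    then have "leading_coeff A I (m mod a)"
      using x' w gen' unfolding leading_coeff_def by blast
    then have "m mod a = 0" using minimal a(1) by simp
    then show "x' [^] m = \<one>" using int_pow_mod_eq[OF x' x'_a, of m] by simp
  qed
qed

lemma splitting_generator:
  assumes I: "finite I" and x0: "x0 \<in> carrier G" and w0: "w0 \<in> I \<rightarrow> carrier G"
  obtains x w where "x \<in> carrier G" "w \<in> I \<rightarrow> carrier G"
    "generate G (insert x (w ` I)) = generate G (insert x0 (w0 ` I))"
    "\<And>m e. x [^] m \<otimes> lincomb G I w e = \<one> \<Longrightarrow> x [^] (m::int) = \<one>"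
proof -
  define A where "A = generate G (insert x0 (w0 ` I))"
  show thesis
  proof (cases "\<exists>a::nat. a > 0 \<and> leading_coeff A I (int a)")
    case False
    have no_coeff: "m = 0" if "leading_coeff A I m" for m
    proof -
      have "leading_coeff A I \<bar>m\<bar>"
        using that leading_coeff_uminus[OF I] by (cases "m \<ge> 0") auto
      moreover have "\<not> (nat \<bar>m\<bar> > 0 \<and> leading_coeff A I (int (nat \<bar>m\<bar>)))"
        using False by blast
      ultimately show ?thesis by simp
    qed
    have "x0 [^] m = \<one>" if "x0 [^] (m::int) \<otimes> lincomb G I w0 e = \<one>" for m e
    proof -
      have "leading_coeff A I m" using that x0 w0 unfolding leading_coeff_def A_def by blast
      then show ?thesis using no_coeff by fastforce
    qed
    then show thesis using that[OF x0 w0] by blast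
  next
    case True
    define a where "a = (LEAST a::nat. a > 0 \<and> leading_coeff A I (int a))"
    have a: "int a > 0" "leading_coeff A I (int a)"
      using LeastI_ex[OF True] unfolding a_def by auto
    have minimal: "b = 0" if "leading_coeff A I b" "0 \<le> b" "b < int a" for b
      using Least_le[of "\<lambda>a. a > 0 \<and> leading_coeff A I (int a)" "nat b"] that
      unfolding a_def[symmetric] by (cases "b = 0") auto
    show thesis
    proof (rule minimal_leading_coeff_splits[OF I a minimal])
      fix x w assume x: "x \<in> carrier G" and w: "w \<in> I \<rightarrow> carrier G"
        and gen: "generate G (insert x (w ` I)) = A"
        and split: "\<And>m e. x [^] m \<otimes> lincomb G I w e = \<one> \<Longrightarrow> x [^] (m::int) = \<one>"
      show thesis by (rule that[OF x w gen[unfolded A_def] split])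
    qed
  qed
qed

lemma cyclic_independent_generators:
  "finite I \<Longrightarrow> z \<in> I \<rightarrow> carrier G \<Longrightarrow>
    \<exists>y. y \<in> I \<rightarrow> carrier G \<and> generate G (y ` I) = generate G (z ` I) \<and> cyclic_independent G I y"
proof (induction I arbitrary: z rule: finite_induct)
  case empty
  then show ?case unfolding cyclic_independent_def by blast
next
  case (insert i I)
  obtain x w where x: "x \<in> carrier G" and w: "w \<in> I \<rightarrow> carrier G"
    and gen: "generate G (insert x (w ` I)) = generate G (insert (z i) (z ` I))"
    and split: "\<And>m e. x [^] m \<otimes> lincomb G I w e = \<one> \<Longrightarrow> x [^] (m::int) = \<one>"
    using splitting_generator[OF insert.hyps(1), of "z i" z] insert.prems by auto
  obtain v where v: "v \<in> I \<rightarrow> carrier G" and gen_v: "generate G (v ` I) = generate G (w ` I)"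
    and indep_v: "cyclic_independent G I v"
    using insert.IH[OF w] by blast
  define y where "y = v(i := x)"
  have y: "y \<in> insert i I \<rightarrow> carrier G" unfolding y_def using v x by auto
  have "y ` insert i I = insert x (v ` I)"
    unfolding y_def using insert.hyps(2) by (auto intro!: image_cong)
  then have "generate G (y ` insert i I) = generate G (insert x (v ` I))" by simp
  also have "\<dots> = generate G (z ` insert i I)"
    using generate_insert_cong[OF _ _ x gen_v] v w gen by auto
  finally have gen_y: "generate G (y ` insert i I) = generate G (z ` insert i I)" .
  have "y j [^] c j = \<one>" if c: "lincomb G (insert i I) y c = \<one>" and j: "j \<in> insert i I" for c j
  proof -
    have lc_y: "lincomb G I y c = lincomb G I v c"
      unfolding y_def using v insert.hyps(2) by (intro lincomb_cong) auto
    have rel: "x [^] c i \<otimes> lincomb G I v c = \<one>"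
      using c lincomb_insert[OF insert.hyps(1,2) y] lc_y by (simp add: y_def)
    obtain e where "lincomb G I v c = lincomb G I w e"
      using gen_v generate_eq_range_lincomb[OF insert.hyps(1)] v w by (metis rangeE rangeI)
    then have xi: "x [^] c i = \<one>" using split rel by simp
    then have "lincomb G I v c = \<one>" using rel v by simp
    then show ?thesis
      using indep_v xi j insert.hyps(2) unfolding cyclic_independent_def y_def by auto
  qed
  then show ?case using y gen_y unfolding cyclic_independent_def by blast
qed

end

section \<open>Torsion and free part of a finitely generated abelian group\<close>

definition torsion :: "('a, 'c) monoid_scheme \<Rightarrow> 'a set" where
  "torsion G = {x \<in> carrier G. \<exists>n::nat. n > 0 \<and> x [^]\<^bsub>G\<^esub> n = \<one>\<^bsub>G\<^esub>}"

lemma (in group) torsion_iff_ord: "x \<in> torsion G \<longleftrightarrow> x \<in> carrier G \<and> ord x \<noteq> 0"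
proof
  assume "x \<in> torsion G"
  then show "x \<in> carrier G \<and> ord x \<noteq> 0" unfolding torsion_def using ord_eq_0 by blast
next
  assume "x \<in> carrier G \<and> ord x \<noteq> 0"
  then show "x \<in> torsion G" unfolding torsion_def by (auto intro!: exI[of _ "ord x"])
qed

lemma (in group) int_pow_eq_one_not_torsion:
  "x \<in> carrier G \<Longrightarrow> x \<notin> torsion G \<Longrightarrow> x [^] (m::int) = \<one> \<Longrightarrow> m = 0"
  by (simp add: torsion_iff_ord int_pow_eq_id)

lemma (in comm_group) subgroup_torsion: "subgroup (torsion G) G"
proof (rule subgroupI)
  fix x y assume x: "x \<in> torsion G" and y: "y \<in> torsion G"
  then obtain n m :: nat where "n > 0" "x [^] n = \<one>" "m > 0" "y [^] m = \<one>"
    unfolding torsion_def by blast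
  moreover have "x \<in> carrier G" "y \<in> carrier G" using x y unfolding torsion_def by auto
  ultimately have "x [^] (n * m) = \<one>" "y [^] (m * n) = \<one>" "inv x [^] n = \<one>"
    by (simp_all add: nat_pow_inv flip: nat_pow_pow)
  then have "(x \<otimes> y) [^] (n * m) = \<one>" "inv x [^] n = \<one>"
    using \<open>x \<in> carrier G\<close> \<open>y \<in> carrier G\<close> by (simp_all add: nat_pow_distrib mult.commute)
  moreover have "n * m > 0" using \<open>n > 0\<close> \<open>m > 0\<close> by simp
  ultimately show "x \<otimes> y \<in> torsion G" "inv x \<in> torsion G"
    using \<open>n > 0\<close> \<open>x \<in> carrier G\<close> \<open>y \<in> carrier G\<close> unfolding torsion_def by blast+
qed (auto simp: torsion_def intro!: exI[of _ 1])

lemma hom_torsion: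
  assumes "group G" "group H" "h \<in> hom G H"
  shows "h ` torsion G \<subseteq> torsion H"
proof -
  interpret h: group_hom G H h using assms by (simp add: group_hom_def group_hom_axioms_def)
  show ?thesis unfolding torsion_def by (auto simp flip: h.hom_nat_pow)
qed

lemma (in comm_group) pow_card_torsion:
  assumes "finite (torsion G)" "x \<in> torsion G"
  shows "x [^] card (torsion G) = \<one>"
proof -
  let ?T = "subgroup_generated G (torsion G)"
  have T: "carrier ?T = torsion G"
    by (simp add: subgroup.carrier_subgroup_generated_subgroup subgroup_torsion)
  have "x [^]\<^bsub>?T\<^esub> order ?T = \<one>\<^bsub>?T\<^esub>"
    using group.pow_order_eq_1[OF group_subgroup_generated] assms(2) T by simp
  then show ?thesis unfolding order_def T by (simp add: pow_subgroup_generated)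
qed

lemma exists_nontrivial_int_solution:
  fixes v :: "'b \<Rightarrow> 'j \<Rightarrow> int"
  assumes "finite J" "finite B" "card J < card B"
  shows "\<exists>c. (\<exists>b\<in>B. c b \<noteq> 0) \<and> (\<forall>j\<in>J. (\<Sum>b\<in>B. c b * v b j) = 0)"
  using assms
proof (induction J arbitrary: B v rule: finite_induct)
  case empty
  then show ?case by (intro exI[of _ "\<lambda>_. 1"]) (auto simp: card_gt_0_iff)
next
  case (insert j J B v)
  show ?case
  proof (cases "\<forall>b\<in>B. v b j = 0")
    case True
    then show ?thesis using insert.IH[of B v] insert.prems insert.hyps by auto
  next
    case False
    then obtain b0 where b0: "b0 \<in> B" "v b0 j \<noteq> 0" by blast
    let ?B' = "B - {b0}"
    \<comment> \<open>eliminate the unknown b0 by means of equation j\<close>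
    define v' where "v' b t = v b0 j * v b t - v b j * v b0 t" for b t
    have "card J < card ?B'" using insert.prems insert.hyps b0 by simp
    then obtain c' where c': "\<exists>b\<in>?B'. c' b \<noteq> 0" "\<forall>t\<in>J. (\<Sum>b\<in>?B'. c' b * v' b t) = 0"
      using insert.IH[of ?B' v'] insert.prems by blast
    define c where "c b = (if b = b0 then - (\<Sum>b\<in>?B'. c' b * v b j) else v b0 j * c' b)" for b
    have sum_B: "(\<Sum>b\<in>B. c b * v b t)
        = - (\<Sum>b\<in>?B'. c' b * v b j) * v b0 t + v b0 j * (\<Sum>b\<in>?B'. c' b * v b t)" for t
    proof -
      have "(\<Sum>b\<in>?B'. c b * v b t) = v b0 j * (\<Sum>b\<in>?B'. c' b * v b t)"
        by (auto simp: c_def sum_distrib_left mult.assoc intro!: sum.cong)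
      then show ?thesis using b0 insert.prems(1) by (simp add: sum.remove c_def)
    qed
    have "(\<Sum>b\<in>B. c b * v b t) = 0" if "t \<in> insert j J" for t
    proof (cases "t = j")
      case False
      then have "(\<Sum>b\<in>B. c b * v b t) = (\<Sum>b\<in>?B'. c' b * v' b t)"
        unfolding sum_B v'_def
        by (simp add: sum_distrib_left sum_distrib_right sum_subtractf algebra_simps)
      then show ?thesis using c'(2) that False by simp
    qed (simp add: sum_B)
    moreover have "\<exists>b\<in>B. c b \<noteq> 0" using c'(1) b0 by (auto simp: c_def)
    ultimately show ?thesis by blast
  qed
qed

locale cyclic_decomposition = comm_group G for G (structure) +
  fixes I :: "'i set" and y :: "'i \<Rightarrow> 'a"
  assumes finite_index: "finite I"
    and gens_closed: "y \<in> I \<rightarrow> carrier G"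
    and generate_gens: "generate G (y ` I) = carrier G"
    and independent: "cyclic_independent G I y"
begin

definition free_index :: "'i set" where
  "free_index = {i \<in> I. y i \<notin> torsion G}"

definition free_part :: "'a set" where
  "free_part = generate G (y ` free_index)"

lemma finite_free_index: "finite free_index"
  using finite_index unfolding free_index_def by simp

lemma free_gens_closed: "y \<in> free_index \<rightarrow> carrier G"
  using gens_closed unfolding free_index_def by auto

lemma torsion_gens_closed: "y \<in> I - free_index \<rightarrow> carrier G"
  using gens_closed by auto

lemma lincomb_split:
  "lincomb G I y c = lincomb G (I - free_index) y c \<otimes> lincomb G free_index y c"
proof -
  have "lincomb G ((I - free_index) \<union> free_index) y c
      = lincomb G (I - free_index) y c \<otimes> lincomb G free_index y c"
    using finite_index finite_free_index gens_closed free_gens_closed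
    by (intro lincomb_Un_disjoint) auto
  moreover have "(I - free_index) \<union> free_index = I" unfolding free_index_def by blast
  ultimately show ?thesis by simp
qed

lemma lincomb_torsion_gens_in_torsion: "lincomb G (I - free_index) y c \<in> torsion G"
  by (rule lincomb_in_subgroup[OF subgroup_torsion]) (auto simp: free_index_def)

lemma free_part_eq_range: "free_part = range (lincomb G free_index y)"
  unfolding free_part_def by (rule generate_eq_range_lincomb[OF finite_free_index free_gens_closed])

lemma lincomb_free_gens_eq_one:
  assumes "J \<subseteq> free_index" "lincomb G J y c = \<one>" "i \<in> J"
  shows "c i = 0"
proof -
  have "cyclic_independent G J y"
    using assms(1) by (intro cyclic_independent_subset[OF finite_index gens_closed independent])
      (auto simp: free_index_def)
  then have "y i [^] c i = \<one>" using assms unfolding cyclic_independent_def by blast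
  then show ?thesis
    using assms free_gens_closed int_pow_eq_one_not_torsion free_index_def by auto
qed

lemma torsion_Int_free_part: "torsion G \<inter> free_part \<subseteq> {\<one>}"
proof
  fix g assume g: "g \<in> torsion G \<inter> free_part"
  then obtain c where g_eq: "g = lincomb G free_index y c" unfolding free_part_eq_range by blast
  obtain n :: nat where n: "n > 0" "g [^] n = \<one>" using g unfolding torsion_def by blast
  then have "lincomb G free_index y (\<lambda>i. int n * c i) = \<one>"
    using lincomb_pow[OF finite_free_index free_gens_closed, of c "int n"] g_eq by (simp add: int_pow_int)
  then have "\<forall>i \<in> free_index. c i = 0" using lincomb_free_gens_eq_one[OF subset_refl] n(1) by fastforce
  then show "g \<in> {\<one>}" using g_eq by (simp add: lincomb_zero_coeffs)
qed

lemma torsion_eq_range: "torsion G = range (lincomb G (I - free_index) y)"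
proof
  show "range (lincomb G (I - free_index) y) \<subseteq> torsion G"
    using lincomb_torsion_gens_in_torsion by auto
  show "torsion G \<subseteq> range (lincomb G (I - free_index) y)"
  proof
    fix g assume g: "g \<in> torsion G"
    then obtain c where "g = lincomb G I y c"
      using generate_eq_range_lincomb[OF finite_index gens_closed] generate_gens
      unfolding torsion_def by blast
    then have c: "g = lincomb G (I - free_index) y c \<otimes> lincomb G free_index y c"
      using lincomb_split by simp
    let ?t = "lincomb G (I - free_index) y c"
    have t: "?t \<in> torsion G" "?t \<in> carrier G"
      using lincomb_torsion_gens_in_torsion torsion_gens_closed by auto
    have "lincomb G free_index y c = inv ?t \<otimes> g"
      using c t(2) free_gens_closed by (simp add: m_assoc[symmetric])
    also have "\<dots> \<in> torsion G"
      using g t(1) subgroup_torsion by (simp add: subgroup.m_closed subgroup.m_inv_closed)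
    finally have "lincomb G free_index y c = \<one>"
      using torsion_Int_free_part free_part_eq_range by blast
    then show "g \<in> range (lincomb G (I - free_index) y)" using c t(2) by simp
  qed
qed

lemma finite_torsion: "finite (torsion G)"
proof -
  let ?T = "I - free_index"
  have "torsion G \<subseteq> lincomb G ?T y ` (\<Pi>\<^sub>E i \<in> ?T. {0..<int (ord (y i))})"
  proof
    fix g assume "g \<in> torsion G"
    then obtain c where g: "g = lincomb G ?T y c" unfolding torsion_eq_range by auto
    define c' where "c' = (\<lambda>i \<in> ?T. c i mod int (ord (y i)))"
    have ord: "ord (y i) > 0" if "i \<in> ?T" for i
      using that gens_closed torsion_iff_ord unfolding free_index_def by auto
    then have "c' \<in> (\<Pi>\<^sub>E i \<in> ?T. {0..<int (ord (y i))})" unfolding c'_def by auto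
    moreover have "lincomb G ?T y c' = g"
      unfolding g c'_def using torsion_gens_closed
      by (intro lincomb_cong) (auto simp: int_pow_eq Pi_def)
    ultimately show "g \<in> lincomb G ?T y ` (\<Pi>\<^sub>E i \<in> ?T. {0..<int (ord (y i))})" by blast
  qed
  moreover have "finite (\<Pi>\<^sub>E i \<in> ?T. {0..<int (ord (y i))})"
    using finite_index by (intro finite_PiE) auto
  ultimately show ?thesis by (meson finite_surj)
qed

lemma subgroup_free_part: "subgroup free_part G"
  unfolding free_part_def using free_gens_closed by (intro generate_is_subgroup) auto

lemma iso_free_part: "sum_group free_index (\<lambda>_. integer_group) \<cong> subgroup_generated G free_part"
proof -
  let ?Z = "sum_group free_index (\<lambda>_. integer_group)"
  have Z: "carrier ?Z = (\<Pi>\<^sub>E i \<in> free_index. UNIV)"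
    using finite_free_index by (auto simp: carrier_sum_group intro: finite_subset)
  have F: "carrier (subgroup_generated G free_part) = free_part"
    by (rule subgroup.carrier_subgroup_generated_subgroup[OF subgroup_free_part])
  let ?\<Theta> = "lincomb G free_index y"
  have lc: "?\<Theta> (\<lambda>i \<in> free_index. c i) = ?\<Theta> c" for c
    using free_gens_closed by (intro lincomb_cong) auto
  have "?\<Theta> \<in> hom ?Z (subgroup_generated G free_part)"
  proof (rule homI)
    show "?\<Theta> c \<in> carrier (subgroup_generated G free_part)" for c
      unfolding F by (simp add: free_part_eq_range)
    show "?\<Theta> (c \<otimes>\<^bsub>?Z\<^esub> d) = ?\<Theta> c \<otimes>\<^bsub>subgroup_generated G free_part\<^esub> ?\<Theta> d" for c d
      by (simp add: lc lincomb_mult[OF free_gens_closed])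
  qed
  moreover have "inj_on ?\<Theta> (carrier ?Z)"
  proof (rule inj_onI)
    fix c d assume c: "c \<in> carrier ?Z" and d: "d \<in> carrier ?Z" and eq: "?\<Theta> c = ?\<Theta> d"
    have "?\<Theta> (\<lambda>i. c i + - d i) = ?\<Theta> c \<otimes> inv (?\<Theta> d)"
      using free_gens_closed finite_free_index by (simp add: lincomb_mult lincomb_inv)
    also have "\<dots> = \<one>" using eq free_gens_closed by simp
    finally show "c = d"
      using lincomb_free_gens_eq_one[OF subset_refl] c d unfolding Z by (intro PiE_ext) force+
  qed
  moreover have "?\<Theta> ` carrier ?Z = free_part"
    unfolding Z free_part_eq_range using lc by (auto intro!: image_eqI[of _ _ "restrict _ free_index"])
  ultimately have "?\<Theta> \<in> iso ?Z (subgroup_generated G free_part)"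
    unfolding iso_def bij_betw_def F by simp
  then show ?thesis by (rule is_isoI)
qed

lemma set_mult_torsion_free_part: "torsion G <#> free_part = carrier G"
proof
  show "torsion G <#> free_part \<subseteq> carrier G"
    using subgroup_torsion subgroup_free_part by (intro set_mult_closed subgroup.subset)
  show "carrier G \<subseteq> torsion G <#> free_part"
  proof
    fix g assume "g \<in> carrier G"
    then obtain c where "g = lincomb G I y c"
      using generate_eq_range_lincomb[OF finite_index gens_closed] generate_gens by auto
    then have "g = lincomb G (I - free_index) y c \<otimes> lincomb G free_index y c"
      by (simp add: lincomb_split)
    then show "g \<in> torsion G <#> free_part"
      using lincomb_torsion_gens_in_torsion[of c] unfolding set_mult_def free_part_eq_range by blast
  qed
qed

lemma iso_torsion_free:
  "G \<cong> subgroup_generated G (torsion G) \<times>\<times> free_Abelian_group free_index"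
proof -
  let ?T = "subgroup_generated G (torsion G)" and ?F = "subgroup_generated G free_part"
  interpret group_disjoint_sum G "torsion G" free_part
    by (intro group_disjoint_sum.intro is_group subgroup_torsion subgroup_free_part)
  have "(\<lambda>(x, y). x \<otimes> y) \<in> iso (?T \<times>\<times> ?F) G"
    using iso_group_mul[OF comm_group_axioms] torsion_Int_free_part set_mult_torsion_free_part
    by simp
  then have "G \<cong> ?T \<times>\<times> ?F"
    by (intro group.iso_sym[OF DirProd_group] is_isoI) auto
  also have "?T \<times>\<times> ?F \<cong> ?T \<times>\<times> free_Abelian_group free_index"
  proof (rule group.DirProd_iso_trans)
    have "?F \<cong> sum_group free_index (\<lambda>_. integer_group)"
      by (rule group.iso_sym[OF _ iso_free_part]) simp
    then show "?F \<cong> free_Abelian_group free_index"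
      using isomorphic_sum_integer_group by (rule iso_trans)
  qed auto
  finally show ?thesis .
qed

lemma inj_on_free_gens: "inj_on y free_index"
proof (rule inj_onI, rule ccontr)
  fix i j assume ij: "i \<in> free_index" "j \<in> free_index" "y i = y j" "i \<noteq> j"
  define c where "c k = (if k = i then 1 else -1 :: int)" for k
  have yi: "y i \<in> carrier G" using ij free_gens_closed by auto
  have "lincomb G {i, j} y c = y i \<otimes> inv (y i)"
    using ij yi by (simp add: lincomb_def finprod_insert c_def int_pow_neg)
  then have "c i = 0"
    using lincomb_free_gens_eq_one[of "{i, j}" c i] ij yi by simp
  then show False by (simp add: c_def)
qed

lemma Z_independent_free_gens: "Z_independent G (y ` free_index)"
  unfolding Z_independent_def
proof (intro conjI allI impI)
  show "y ` free_index \<subseteq> carrier G" using free_gens_closed by auto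
  fix S c assume "finite S \<and> S \<subseteq> y ` free_index \<and> finprod G (\<lambda>x. x [^] (c x :: int)) S = \<one>"
  then have S: "S \<subseteq> y ` free_index" and rel: "finprod G (\<lambda>x. x [^] c x) S = \<one>" by auto
  define J where "J = free_index \<inter> y -` S"
  have J: "J \<subseteq> free_index" "S = y ` J" using S unfolding J_def by auto
  have "lincomb G J y (\<lambda>i. c (y i)) = finprod G (\<lambda>x. x [^] c x) S"
    unfolding lincomb_def J(2) using J(1) inj_on_free_gens free_gens_closed
    by (subst finprod_reindex) (auto intro: inj_on_subset)
  then have "c (y i) = 0" if "i \<in> J" for i
    using lincomb_free_gens_eq_one[OF J(1)] rel that by simp
  then show "\<forall>x\<in>S. c x = 0" using J(2) by blast
qed

lemma lincomb_in_torsion: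
  assumes "\<And>i. i \<in> free_index \<Longrightarrow> c i = 0"
  shows "lincomb G I y c \<in> torsion G"
  using lincomb_torsion_gens_in_torsion[of c] lincomb_zero_coeffs[of free_index c y] assms
    torsion_gens_closed by (simp add: lincomb_split)

lemma card_Z_independent_le:
  assumes B: "Z_independent G B" and B0: "B0 \<subseteq> B" "finite B0"
  shows "card B0 \<le> card free_index"
proof (rule ccontr)
  assume "\<not> ?thesis"
  then have less: "card free_index < card B0" by simp
  have B0G: "B0 \<subseteq> carrier G" using B B0 unfolding Z_independent_def by auto
  then have "\<forall>b \<in> B0. \<exists>c. lincomb G I y c = b"
    using generate_eq_range_lincomb[OF finite_index gens_closed] generate_gens by (metis rangeE subsetD)
  then obtain cb where cb: "\<forall>b \<in> B0. lincomb G I y (cb b) = b" by (rule bchoice[elim_format]) blast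
  obtain c where c: "\<exists>b\<in>B0. c b \<noteq> 0" "\<forall>i\<in>free_index. (\<Sum>b\<in>B0. c b * cb b i) = 0"
    using exists_nontrivial_int_solution[OF finite_free_index B0(2) less, where v = cb] by blast
  let ?g = "lincomb G I y (\<lambda>i. \<Sum>b\<in>B0. c b * cb b i)"
  have "?g \<in> torsion G" using lincomb_in_torsion[of "\<lambda>i. \<Sum>b\<in>B0. c b * cb b i"] c(2) by simp
  then obtain n :: nat where n: "n > 0" "?g [^] n = \<one>" unfolding torsion_def by blast
  have "finprod G (\<lambda>b. b [^] (int n * c b)) B0
      = finprod G (\<lambda>b. lincomb G I y (cb b) [^] (int n * c b)) B0"
    using cb by (intro finprod_cong') (simp_all add: Pi_def subsetD[OF B0G])
  also have "\<dots> = lincomb G I y (\<lambda>i. \<Sum>b\<in>B0. int n * c b * cb b i)"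
    by (rule finprod_lincomb_pow[OF B0(2) finite_index gens_closed])
  also have "\<dots> = ?g [^] int n"
    using finite_index gens_closed by (simp add: lincomb_pow sum_distrib_left mult.assoc)
  also have "\<dots> = \<one>" using n(2) by (simp add: int_pow_int)
  finally have "\<forall>b \<in> B0. int n * c b = 0"
    using Z_independentD[OF B B0(2,1), of "\<lambda>b. int n * c b"] by blast
  then show False using c(1) n(1) by simp
qed

end

section \<open>Finitely generated groups linked by star arrows\<close>

lemma fin_gen_surj_hom_image:
  assumes "group G" "group H" "h \<in> hom G H" "h ` carrier G = carrier H" "fin_gen G"
  shows "fin_gen H"
proof -
  interpret h: group_hom G H h using assms(1-3) by (simp add: group_hom_def group_hom_axioms_def)
  obtain S where S: "finite S" "S \<subseteq> carrier G" "generate G S = carrier G"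
    using assms(5) unfolding fin_gen_def by blast
  then have "generate H (h ` S) = carrier H" using h.generate_img[OF S(2)] assms(4) by simp
  then show ?thesis unfolding fin_gen_def using S by (intro exI[of _ "h ` S"]) auto
qed

lemma fin_gen_DirProd:
  fixes G :: "('a, 'c) monoid_scheme" and H :: "('b, 'd) monoid_scheme"
  assumes G: "group G" and H: "group H" and "fin_gen G" "fin_gen H"
  shows "fin_gen (G \<times>\<times> H)"
proof -
  interpret G: group G by fact
  interpret H: group H by fact
  interpret GH: group "G \<times>\<times> H" using DirProd_group[OF G H] .
  obtain S where S: "finite S" "S \<subseteq> carrier G" "generate G S = carrier G"
    using \<open>fin_gen G\<close> unfolding fin_gen_def by blast
  obtain T where T: "finite T" "T \<subseteq> carrier H" "generate H T = carrier H"
    using \<open>fin_gen H\<close> unfolding fin_gen_def by blast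
  define inl where "inl x = (x, \<one>\<^bsub>H\<^esub>)" for x :: 'a
  define inr where "inr x = (\<one>\<^bsub>G\<^esub>, x)" for x :: 'b
  have "inl \<in> hom G (G \<times>\<times> H)" "inr \<in> hom H (G \<times>\<times> H)"
    unfolding inl_def inr_def by (auto intro!: homI)
  then have inl: "group_hom G (G \<times>\<times> H) inl" and inr: "group_hom H (G \<times>\<times> H) inr"
    by (simp_all add: group_hom_def group_hom_axioms_def G.is_group H.is_group GH.is_group)
  let ?U = "inl ` S \<union> inr ` T"
  have U: "?U \<subseteq> carrier (G \<times>\<times> H)" using S T by (auto simp: inl_def inr_def)
  have "p \<in> generate (G \<times>\<times> H) ?U" if p: "p \<in> carrier (G \<times>\<times> H)" for p
  proof -
    obtain u v where u: "u \<in> carrier G" and v: "v \<in> carrier H" and "p = (u, v)"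
      using p by auto
    then have p_eq: "p = inl u \<otimes>\<^bsub>G \<times>\<times> H\<^esub> inr v" by (simp add: inl_def inr_def)
    have "inl u \<in> generate (G \<times>\<times> H) (inl ` S)"
      using group_hom.generate_img[OF inl S(2)] S(3) u by simp
    then have "inl u \<in> generate (G \<times>\<times> H) ?U"
      using GH.mono_generate[of "inl ` S" ?U] by blast
    moreover have "inr v \<in> generate (G \<times>\<times> H) (inr ` T)"
      using group_hom.generate_img[OF inr T(2)] T(3) v by simp
    then have "inr v \<in> generate (G \<times>\<times> H) ?U"
      using GH.mono_generate[of "inr ` T" ?U] by blast
    ultimately show ?thesis unfolding p_eq by (rule generate.eng)
  qed
  then have "generate (G \<times>\<times> H) ?U = carrier (G \<times>\<times> H)"
    using GH.generate_incl[OF U] by blast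
  then show ?thesis unfolding fin_gen_def using S(1) T(1) U by (intro exI[of _ ?U]) auto
qed

lemma fin_gen_if_coprime_arrows:
  assumes G: "comm_group G" and H: "comm_group H" and "fin_gen H" "coprime m n"
    and "mult_arrow m G H" "mult_arrow n G H"
  shows "fin_gen G"
proof -
  interpret G: comm_group G by fact
  interpret H: comm_group H by fact
  obtain P Q where P: "P \<in> hom G (H \<times>\<times> H)" and Q: "Q \<in> hom (H \<times>\<times> H) G"
    and QP: "\<And>x. x \<in> carrier G \<Longrightarrow> Q (P x) = x"
    by (rule coprime_mult_arrows_retract[OF assms(1,2,4-6)]) blast
  have "Q ` carrier (H \<times>\<times> H) \<subseteq> carrier G" using Q by (auto simp: hom_in_carrier)
  moreover have "x \<in> Q ` carrier (H \<times>\<times> H)" if "x \<in> carrier G" for x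
    using that P QP[OF that, symmetric] by (blast intro: hom_in_carrier)
  ultimately have "Q ` carrier (H \<times>\<times> H) = carrier G" by blast
  then show ?thesis
    using fin_gen_surj_hom_image[OF DirProd_group[OF H.is_group H.is_group] G.is_group Q]
      fin_gen_DirProd[OF H.is_group H.is_group \<open>fin_gen H\<close> \<open>fin_gen H\<close>] by blast
qed

lemma (in comm_group) cyclic_decomposition_exists:
  assumes "fin_gen G"
  obtains I :: "'a set" and y where "cyclic_decomposition G I y"
proof -
  obtain S where S: "finite S" "S \<subseteq> carrier G" "generate G S = carrier G"
    using assms unfolding fin_gen_def by blast
  then obtain y where "y \<in> S \<rightarrow> carrier G" "generate G (y ` S) = carrier G" "cyclic_independent G S y"
    using cyclic_independent_generators[OF S(1), of "\<lambda>x. x"] by auto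
  then show thesis
    using S(1) by (intro that cyclic_decomposition.intro cyclic_decomposition_axioms.intro
        comm_group_axioms)
qed

lemma mult_arrow_inj_on_bounded_exponent:
  assumes G: "comm_group G" and H: "comm_group H" and \<phi>: "\<phi> \<in> hom G H" and \<psi>: "\<psi> \<in> hom H G"
    and \<psi>\<phi>: "\<And>x. x \<in> carrier G \<Longrightarrow> \<psi> (\<phi> x) = x [^]\<^bsub>G\<^esub> (n::int)"
    and T: "subgroup T G" and exp: "\<And>x. x \<in> T \<Longrightarrow> x [^]\<^bsub>G\<^esub> (e::int) = \<one>\<^bsub>G\<^esub>"
    and "coprime n e"
  shows "inj_on \<phi> T"
proof -
  interpret G: comm_group G by fact
  interpret H: comm_group H by fact
  interpret \<phi>: group_hom G H \<phi> using \<phi> by (simp add: group_hom_def group_hom_axioms_def)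
  obtain a b where ab: "a * n + b * e = 1"
    using bezout_int[of n e] \<open>coprime n e\<close> by (auto simp: coprime_iff_gcd_eq_1)
  have trivial_kernel: "x = \<one>\<^bsub>G\<^esub>" if x: "x \<in> T" "\<phi> x = \<one>\<^bsub>H\<^esub>" for x
  proof -
    have xG: "x \<in> carrier G" using x(1) subgroup.subset[OF T] by blast
    have xn: "x [^]\<^bsub>G\<^esub> n = \<one>\<^bsub>G\<^esub>"
      using \<psi>\<phi>[OF xG] x(2) hom_one[OF \<psi> H.is_group G.is_group] by simp
    have "x = x [^]\<^bsub>G\<^esub> (a * n + b * e)" using ab xG by simp
    also have "\<dots> = (x [^]\<^bsub>G\<^esub> n) [^]\<^bsub>G\<^esub> a \<otimes>\<^bsub>G\<^esub> (x [^]\<^bsub>G\<^esub> e) [^]\<^bsub>G\<^esub> b"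
      using xG by (simp add: G.int_pow_mult G.int_pow_pow mult.commute)
    also have "\<dots> = \<one>\<^bsub>G\<^esub>" using xn exp[OF x(1)] by simp
    finally show ?thesis .
  qed
  show ?thesis
  proof (rule inj_onI)
    fix g g' assume g: "g \<in> T" "g' \<in> T" "\<phi> g = \<phi> g'"
    have gG: "g \<in> carrier G" "g' \<in> carrier G" using g subgroup.subset[OF T] by blast+
    have "g \<otimes>\<^bsub>G\<^esub> inv\<^bsub>G\<^esub> g' \<in> T"
      using g T by (simp add: subgroup.m_closed subgroup.m_inv_closed)
    moreover have "\<phi> (g \<otimes>\<^bsub>G\<^esub> inv\<^bsub>G\<^esub> g') = \<one>\<^bsub>H\<^esub>" using g gG by simp
    ultimately have "g \<otimes>\<^bsub>G\<^esub> inv\<^bsub>G\<^esub> g' = \<one>\<^bsub>G\<^esub>" by (rule trivial_kernel)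
    then show "g = g'" using gG by (metis G.inv_closed G.inv_equality G.inv_inv)
  qed
qed

lemma star_arrow_inj_on_torsion:
  assumes G: "comm_group G" and H: "comm_group H" and "star_arrow G H" "finite (torsion G)"
  obtains \<phi> where "\<phi> \<in> hom G H" "inj_on \<phi> (torsion G)"
proof -
  interpret G: comm_group G by fact
  have "\<one>\<^bsub>G\<^esub> \<in> torsion G" using subgroup.one_closed[OF G.subgroup_torsion] .
  then have "int (card (torsion G)) \<noteq> 0" using \<open>finite (torsion G)\<close> by auto
  then obtain n where cop: "coprime n (int (card (torsion G)))" and "mult_arrow n G H"
    using star_arrowD[OF \<open>star_arrow G H\<close>] by blast
  then obtain \<phi> \<psi> where \<phi>: "\<phi> \<in> hom G H" and \<psi>: "\<psi> \<in> hom H G"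
    and \<psi>\<phi>: "\<And>x. x \<in> carrier G \<Longrightarrow> \<psi> (\<phi> x) = x [^]\<^bsub>G\<^esub> n"
    by (elim mult_arrowE) blast
  have exp: "x [^]\<^bsub>G\<^esub> int (card (torsion G)) = \<one>\<^bsub>G\<^esub>" if "x \<in> torsion G" for x
    using G.pow_card_torsion[OF \<open>finite (torsion G)\<close> that] by (simp add: int_pow_int)
  have "inj_on \<phi> (torsion G)"
    using mult_arrow_inj_on_bounded_exponent[OF G H \<phi> \<psi> \<psi>\<phi> G.subgroup_torsion exp cop] .
  then show thesis using that \<phi> by blast
qed

lemma iso_subgroup_generated_if_bij_betw:
  assumes "group G" "group H" "\<phi> \<in> hom G H" "subgroup S G" "subgroup S' H" "bij_betw \<phi> S S'"
  shows "subgroup_generated G S \<cong> subgroup_generated H S'"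
proof -
  have S: "carrier (subgroup_generated G S) = S" "carrier (subgroup_generated H S') = S'"
    using assms(4,5) by (simp_all add: subgroup.carrier_subgroup_generated_subgroup)
  have "\<phi> \<in> hom (subgroup_generated G S) (subgroup_generated H S')"
    using assms(3,6) subgroup.subset[OF assms(4)] unfolding hom_def S bij_betw_def
    by (auto simp: subgroup_generated_def)
  then have "\<phi> \<in> iso (subgroup_generated G S) (subgroup_generated H S')"
    using assms(6) unfolding iso_def S by simp
  then show ?thesis by (rule is_isoI)
qed

lemma iso_torsion_if_star_arrows:
  assumes G: "comm_group G" and H: "comm_group H" and "star_arrow G H" "star_arrow H G"
    and "finite (torsion G)" "finite (torsion H)"
  shows "subgroup_generated G (torsion G) \<cong> subgroup_generated H (torsion H)"
proof -
  have grp: "group G" "group H" using G H by (simp_all add: comm_group_def)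
  obtain \<phi> where \<phi>: "\<phi> \<in> hom G H" "inj_on \<phi> (torsion G)"
    using star_arrow_inj_on_torsion[OF G H \<open>star_arrow G H\<close> \<open>finite (torsion G)\<close>] .
  obtain \<phi>' where \<phi>': "\<phi>' \<in> hom H G" "inj_on \<phi>' (torsion H)"
    using star_arrow_inj_on_torsion[OF H G \<open>star_arrow H G\<close> \<open>finite (torsion H)\<close>] .
  have img: "\<phi> ` torsion G \<subseteq> torsion H" "\<phi>' ` torsion H \<subseteq> torsion G"
    using hom_torsion[OF grp \<phi>(1)] hom_torsion[OF grp(2,1) \<phi>'(1)] by auto
  have "card (torsion H) \<le> card (torsion G)"
    using card_inj_on_le[OF \<phi>'(2) img(2) \<open>finite (torsion G)\<close>] .
  then have "\<phi> ` torsion G = torsion H"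
    using card_subset_eq[OF \<open>finite (torsion H)\<close> img(1)] card_image[OF \<phi>(2)]
      card_mono[OF \<open>finite (torsion H)\<close> img(1)] by simp
  then have "bij_betw \<phi> (torsion G) (torsion H)" using \<phi>(2) by (simp add: bij_betw_def)
  then show ?thesis
    by (rule iso_subgroup_generated_if_bij_betw[OF grp \<phi>(1) comm_group.subgroup_torsion[OF G]
          comm_group.subgroup_torsion[OF H]])
qed

lemma free_rank_le_if_rank0_le:
  assumes dG: "cyclic_decomposition G I y" and dH: "cyclic_decomposition H J z"
    and "rank0_le G H"
  shows "card (cyclic_decomposition.free_index G I y) \<le> card (cyclic_decomposition.free_index H J z)"
proof -
  interpret G: cyclic_decomposition G I y by fact
  interpret H: cyclic_decomposition H J z by fact
  obtain B f where B: "Z_independent H B" and f: "inj_on f (y ` G.free_index)" "f ` y ` G.free_index \<subseteq> B"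
    using \<open>rank0_le G H\<close> G.Z_independent_free_gens unfolding rank0_le_def by meson
  have "card G.free_index = card (f ` y ` G.free_index)"
    using f(1) G.inj_on_free_gens by (simp add: card_image)
  also have "\<dots> \<le> card H.free_index"
    using H.card_Z_independent_le[OF B f(2)] G.finite_free_index by simp
  finally show ?thesis .
qed

lemma iso_if_fin_gen_star_arrows:
  fixes G :: "('a, 'c) monoid_scheme" and H :: "('b, 'd) monoid_scheme"
  assumes G: "comm_group G" and H: "comm_group H" and "fin_gen G" "fin_gen H"
    and GH: "star_arrow G H" and HG: "star_arrow H G"
  shows "G \<cong> H"
proof -
  obtain I :: "'a set" and y where dG: "cyclic_decomposition G I y"
    using comm_group.cyclic_decomposition_exists[OF G \<open>fin_gen G\<close>] by blast
  obtain J :: "'b set" and z where dH: "cyclic_decomposition H J z"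
    using comm_group.cyclic_decomposition_exists[OF H \<open>fin_gen H\<close>] by blast
  interpret G: cyclic_decomposition G I y by fact
  interpret H: cyclic_decomposition H J z by fact
  have "card G.free_index = card H.free_index"
    using free_rank_le_if_rank0_le[OF dG dH rank0_le_if_star_arrow[OF G H GH]]
      free_rank_le_if_rank0_le[OF dH dG rank0_le_if_star_arrow[OF H G HG]] by simp
  then have "free_Abelian_group G.free_index \<cong> free_Abelian_group H.free_index"
    using G.finite_free_index H.finite_free_index by (simp add: isomorphic_free_Abelian_groups eqpoll_iff_card)
  moreover have "subgroup_generated G (torsion G) \<cong> subgroup_generated H (torsion H)"
    using iso_torsion_if_star_arrows[OF G H GH HG G.finite_torsion H.finite_torsion] .
  ultimately have "subgroup_generated G (torsion G) \<times>\<times> free_Abelian_group G.free_index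
      \<cong> subgroup_generated H (torsion H) \<times>\<times> free_Abelian_group H.free_index"
    by (intro group.DirProd_iso_trans) auto
  with G.iso_torsion_free
  have "G \<cong> subgroup_generated H (torsion H) \<times>\<times> free_Abelian_group H.free_index"
    by (rule iso_trans)
  also have "subgroup_generated H (torsion H) \<times>\<times> free_Abelian_group H.free_index \<cong> H"
    by (rule group.iso_sym[OF H.is_group H.iso_torsion_free])
  finally show ?thesis .
qed

theorem lemma3p14:
  fixes G :: "('a, 'c) monoid_scheme" and H :: "('b, 'd) monoid_scheme"
  assumes "comm_group G" and "comm_group H"
  shows "((\<exists>n::int. n \<noteq> 0 \<and> mult_arrow n G H) \<longrightarrow> rank0_le G H)
    \<and> ((\<exists>m n::int. m \<noteq> 0 \<and> n \<noteq> 0 \<and> gcd m n = 1 \<and> mult_arrow m G H \<and> mult_arrow n G H)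
         \<longrightarrow> direct_summand G (H \<times>\<times> H))
    \<and> (star_arrow G H \<longrightarrow> direct_summand G (H \<times>\<times> H))
    \<and> ((\<exists>n r::int. n \<noteq> 0 \<and> r \<noteq> 0 \<and> gcd n r = 1 \<and> mult_arrow n G H
          \<and> (\<forall>x \<in> carrier G. x [^]\<^bsub>G\<^esub> r = \<one>\<^bsub>G\<^esub>))
         \<longrightarrow> direct_summand G H)
    \<and> ((fin_gen G \<or> fin_gen H) \<and> star_arrow G H \<and> star_arrow H G \<longrightarrow> G \<cong> H)"
proof (intro conjI impI)
  show "rank0_le G H" if "\<exists>n::int. n \<noteq> 0 \<and> mult_arrow n G H"
    using that rank0_le_if_mult_arrow[OF assms] by blast
  show "direct_summand G (H \<times>\<times> H)"
    if "\<exists>m n::int. m \<noteq> 0 \<and> n \<noteq> 0 \<and> gcd m n = 1 \<and> mult_arrow m G H \<and> mult_arrow n G H"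
    using that direct_summand_DirProd_if_coprime_arrows[OF assms] by (auto simp: coprime_iff_gcd_eq_1)
  show "direct_summand G (H \<times>\<times> H)" if "star_arrow G H"
    using star_arrow_coprime_pair[OF that] direct_summand_DirProd_if_coprime_arrows[OF assms] by metis
  show "direct_summand G H"
    if "\<exists>n r::int. n \<noteq> 0 \<and> r \<noteq> 0 \<and> gcd n r = 1 \<and> mult_arrow n G H
          \<and> (\<forall>x \<in> carrier G. x [^]\<^bsub>G\<^esub> r = \<one>\<^bsub>G\<^esub>)"
    using that direct_summand_if_coprime_exponent[OF assms] by (auto simp: coprime_iff_gcd_eq_1)
  show "G \<cong> H" if "(fin_gen G \<or> fin_gen H) \<and> star_arrow G H \<and> star_arrow H G"
  proof -
    have "fin_gen G \<and> fin_gen H"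
      using that star_arrow_coprime_pair fin_gen_if_coprime_arrows[OF assms]
        fin_gen_if_coprime_arrows[OF assms(2,1)] by metis
    then show ?thesis using iso_if_fin_gen_star_arrows[OF assms] that by blast
  qed
qed

end
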